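(* Suppose that for all $0\le t\le T$, $\lambda_{\min}\big(\mathbf{G}(t)+\frac{1}{\alpha^2}\mathbf{V}(t)\big)\ge\frac{\omega}{2}$ for some $\omega>0$. Then with probability at least $1-\delta$ over the initialization, $$|g_k(t)-g_k(0)|\le\frac{4\sqrt n\,\|\mathbf{f}(0)-\mathbf{y}\|_2}{\sqrt m\,\omega}$$ for each $k$ and all $0\le t\le T$.
   Context: Data $(\mathbf{x}_i,y_i)\in\mathbb{R}^d\times\mathbb{R}$, $i=1,\dots,n$, with $\|\mathbf{x}_i\|_2\le1$. Network $f(\mathbf{x})=\frac{1}{\sqrt m}\sum_{k=1}^mc_k\sigma(g_k\mathbf{v}_k^\top\mathbf{x}/\|\mathbf{v}_k\|_2)$, $\sigma(s)=\max\{s,0\}$; initialization with $\alpha>0$: independently $\mathbf{v}_k(0)\sim N(0,\alpha^2\mathbf{I})$, $c_k$ uniform on $\{-1,1\}$, $g_k(0)=\|\mathbf{v}_k(0)\|_2/\alpha$. Gradient flow on $L=\frac12\sum_i(f(\mathbf{x}_i)-y_i)^2$ in $\mathbf{v}_k,g_k$ with $c_k$ fixed; $\mathbf{f}(t)$ predictions, $\mathbf{y}$ targets. Notation: $\mathbf{x}^{\mathbf{u}^\perp}=\mathbf{x}-\mathbf{u}\mathbf{u}^\top\mathbf{x}/\|\mathbf{u}\|_2^2$, $\mathbb{1}_{ik}(t)=\mathbb{1}\{\mathbf{v}_k(t)^\top\mathbf{x}_i\ge0\}$, $\mathbf{V}_{ij}(t)=\frac1m\sum_k\big(\frac{\alpha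 c_kg_k(t)}{\|\mathbf{v}_k(t)\|_2}\big)^2\langle\mathbf{x}_i^{\mathbf{v}_k(t)^\perp},\mathbf{x}_j^{\mathbf{v}_k(t)^\perp}\rangle\mathbb{1}_{ik}(t)\mathbb{1}_{jk}(t)$, $\mathbf{G}_{ij}(t)=\frac1m\sum_k\sigma(\mathbf{v}_k(t)^\top\mathbf{x}_i)\sigma(\mathbf{v}_k(t)^\top\mathbf{x}_j)/\|\mathbf{v}_k(t)\|_2^2$. Under gradient flow $\frac{d\mathbf{f}}{dt}=-(\mathbf{V}(t)/\alpha^2+\mathbf{G}(t))(\mathbf{f}(t)-\mathbf{y})$. *)

theory Defs
  imports "HOL-Analysis.Analysis"
begin

definition relu :: "real \<Rightarrow> real" where
  "relu s = max s 0"

definition perp :: "real^'d \<Rightarrow> real^'d \<Rightarrow> real^'d" where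
  "perp u x = x - ((u \<bullet> x) / (norm u)^2) *\<^sub>R u"

definition ind :: "real^'d \<Rightarrow> real^'d \<Rightarrow> real" where
  "ind v x = (if v \<bullet> x \<ge> 0 then 1 else 0)"

definition net_out :: "('m::finite \<Rightarrow> real) \<Rightarrow> ('m \<Rightarrow> real) \<Rightarrow> ('m \<Rightarrow> real^'d) \<Rightarrow> real^'d \<Rightarrow> real" where
  "net_out c g v x = (1 / sqrt (real CARD('m))) *
     (\<Sum>k\<in>UNIV. c k * relu (g k * (v k \<bullet> x) / norm (v k)))"

definition Vmat :: "real \<Rightarrow> ('m::finite \<Rightarrow> real) \<Rightarrow> ('m \<Rightarrow> real) \<Rightarrow> ('m \<Rightarrow> real^'d)
                     \<Rightarrow> ('n::finite \<Rightarrow> real^'d) \<Rightarrow> real^'n^'n" where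
  "Vmat \<alpha> c g v x = (\<chi> i j. (1 / real CARD('m)) *
     (\<Sum>k\<in>UNIV. (\<alpha> * c k * g k / norm (v k))^2 * (perp (v k) (x i) \<bullet> perp (v k) (x j))
                 * ind (v k) (x i) * ind (v k) (x j)))"

definition Gmat :: "('m::finite \<Rightarrow> real^'d) \<Rightarrow> ('n::finite \<Rightarrow> real^'d) \<Rightarrow> real^'n^'n" where
  "Gmat v x = (\<chi> i j. (1 / real CARD('m)) *
     (\<Sum>k\<in>UNIV. relu (v k \<bullet> x i) * relu (v k \<bullet> x j) / (norm (v k))^2))"

definition lambda_min :: "real^'n^'n \<Rightarrow> real" where
  "lambda_min H = Min {\<mu>. \<exists>z. z \<noteq> 0 \<and> H *v z = \<mu> *\<^sub>R z}"

end

theory Submission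
  imports Defs
begin

text \<open>The residual u = f - y solves u' = -H u with H = G + V / alpha^2 symmetric. Minimising the
Rayleigh quotient shows u . H u \<ge> lambda_min(H) |u|^2 \<ge> (omega/2) |u|^2, so exp(omega t) |u(t)|^2 is
nonincreasing and |u(t)| \<le> exp(-omega t / 2) |u(0)|. Because |c_k| = 1, |x_i| \<le> 1 and the activation
indicator is at most 1, the velocity of g_k is at most sqrt(n/m) |u(t)| by Cauchy-Schwarz; integrating
the exponential bound gives |g_k(t) - g_k(0)| \<le> 2 sqrt n |u(0)| / (sqrt m omega), which is even half
the stated bound.\<close>

lemma nonincreasing_of_deriv_nonpos:
  fixes \<phi> :: "real \<Rightarrow> real"
  assumes "\<And>s. s \<in> {a..b} \<Longrightarrow> (\<phi> has_real_derivative \<phi>' s) (at s within {a..b})"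
    and "\<And>s. s \<in> {a..b} \<Longrightarrow> \<phi>' s \<le> 0"
    and "t \<in> {a..b}"
  shows "\<phi> t \<le> \<phi> a"
proof -
  have "\<exists>s\<in>{a..t}. \<phi> t - \<phi> a = \<phi>' s * (t - a)"
  proof (rule mvt_very_simple[of a t \<phi> "\<lambda>s h. \<phi>' s * h"])
    fix s assume "a \<le> s" "s \<le> t"
    then have "s \<in> {a..b}" and "{a..t} \<subseteq> {a..b}" using assms(3) by auto
    then have "(\<phi> has_real_derivative \<phi>' s) (at s within {a..t})"
      using assms(1) has_field_derivative_subset by blast
    then show "(\<phi> has_derivative (\<lambda>h. \<phi>' s * h)) (at s within {a..t})"
      by (simp add: has_field_derivative_def)
  qed (use assms(3) in auto)
  then obtain s where "s \<in> {a..t}" and "\<phi> t - \<phi> a = \<phi>' s * (t - a)" ..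
  moreover have "\<phi>' s \<le> 0"
    using assms(2,3) \<open>s \<in> {a..t}\<close> by simp
  moreover have "t - a \<ge> 0"
    using \<open>s \<in> {a..t}\<close> by simp
  ultimately show ?thesis
    by (metis diff_le_0_iff_le mult_nonpos_nonneg)
qed

lemma norm_le_exp_decay:
  fixes u :: "real \<Rightarrow> 'a::real_inner"
  assumes deriv: "\<And>s. s \<in> {0..T} \<Longrightarrow> (u has_vector_derivative u' s) (at s within {0..T})"
    and dissipative: "\<And>s. s \<in> {0..T} \<Longrightarrow> u s \<bullet> u' s \<le> - \<kappa> * (norm (u s))\<^sup>2"
    and t: "t \<in> {0..T}"
  shows "norm (u t) \<le> exp (- \<kappa> * t) * norm (u 0)"
proof -
  define h where "h s = exp (2 * \<kappa> * s) * (u s \<bullet> u s)" for s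
  define h' where "h' s = exp (2 * \<kappa> * s) * (2 * \<kappa> * (u s \<bullet> u s) + 2 * (u s \<bullet> u' s))" for s
  have "(h has_real_derivative h' s) (at s within {0..T})" if "s \<in> {0..T}" for s
  proof -
    have "((\<lambda>s. u s \<bullet> u s) has_real_derivative 2 * (u s \<bullet> u' s)) (at s within {0..T})"
    proof -
      have u: "(u has_derivative (\<lambda>h. h *\<^sub>R u' s)) (at s within {0..T})"
        using deriv[OF that] by (simp add: has_vector_derivative_def)
      show ?thesis
        unfolding has_field_derivative_def
        by (rule has_derivative_eq_rhs[OF has_derivative_inner[OF u u]])
           (simp add: fun_eq_iff inner_commute[of "u' s"] algebra_simps)
    qed
    then show ?thesis
      unfolding h_def h'_def by (auto intro!: derivative_eq_intros simp: algebra_simps)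
  qed
  moreover have "h' s \<le> 0" if "s \<in> {0..T}" for s
    using dissipative[OF that] by (simp add: h'_def power2_norm_eq_inner mult_nonneg_nonpos)
  ultimately have "h t \<le> h 0"
    using t by (rule nonincreasing_of_deriv_nonpos)
  then have "(norm (u t))\<^sup>2 \<le> exp (- 2 * \<kappa> * t) * (norm (u 0))\<^sup>2"
    by (simp add: h_def power2_norm_eq_inner exp_minus field_simps)
  also have "\<dots> = (exp (- \<kappa> * t) * norm (u 0))\<^sup>2"
    by (simp add: power_mult_distrib flip: exp_of_nat_mult)
  finally show ?thesis
    by (rule power2_le_imp_le) simp
qed

lemma abs_diff_le_of_deriv_exp_bound:
  fixes \<phi> :: "real \<Rightarrow> real"
  assumes \<kappa>: "\<kappa> > 0"
    and deriv: "\<And>s. s \<in> {0..T} \<Longrightarrow> (\<phi> has_real_derivative \<phi>' s) (at s within {0..T})"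
    and bound: "\<And>s. s \<in> {0..T} \<Longrightarrow> \<bar>\<phi>' s\<bar> \<le> C * exp (- \<kappa> * s)"
    and t: "t \<in> {0..T}"
  shows "\<bar>\<phi> t - \<phi> 0\<bar> \<le> C / \<kappa>"
proof -
  have "0 \<le> C * exp (- \<kappa> * t)"
    using bound[OF t] abs_ge_zero order.trans by blast
  then have "C \<ge> 0"
    by (simp add: zero_le_mult_iff)
  have signed: "\<sigma> * (\<phi> t - \<phi> 0) \<le> C / \<kappa>" if "\<bar>\<sigma>\<bar> = 1" for \<sigma>
  proof -
    define \<psi> where "\<psi> s = \<sigma> * \<phi> s + C / \<kappa> * exp (- \<kappa> * s)" for s
    have "(\<psi> has_real_derivative \<sigma> * \<phi>' s - C * exp (- \<kappa> * s)) (at s within {0..T})"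
      if "s \<in> {0..T}" for s
      unfolding \<psi>_def
      by (rule derivative_eq_intros deriv[OF that] | simp)+ (use \<kappa> in \<open>simp add: field_simps\<close>)
    moreover have "\<sigma> * \<phi>' s - C * exp (- \<kappa> * s) \<le> 0" if "s \<in> {0..T}" for s
      using bound[OF that] \<open>\<bar>\<sigma>\<bar> = 1\<close> abs_ge_self[of "\<sigma> * \<phi>' s"] by (simp add: abs_mult)
    ultimately have "\<psi> t \<le> \<psi> 0"
      using t by (rule nonincreasing_of_deriv_nonpos)
    moreover have "C / \<kappa> * exp (- \<kappa> * t) \<ge> 0"
      using \<open>C \<ge> 0\<close> \<kappa> by simp
    ultimately show ?thesis
      by (simp add: \<psi>_def algebra_simps)
  qed
  show ?thesis
    using signed[of 1] signed[of "-1"] by (simp add: abs_le_iff)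
qed

lemma abs_sum_weighted_le_sqrt_card_mult_norm:
  fixes e :: "real^'n"
  assumes "\<And>i. \<bar>w i\<bar> \<le> 1"
  shows "\<bar>\<Sum>i\<in>UNIV. e $ i * w i\<bar> \<le> sqrt (real CARD('n)) * norm e"
proof -
  have "\<bar>\<Sum>i\<in>UNIV. e $ i * w i\<bar> \<le> (\<Sum>i\<in>UNIV. \<bar>e $ i\<bar>)"
    using assms by (intro order.trans[OF sum_abs] sum_mono) (simp add: abs_mult mult_left_le)
  also have "\<dots> \<le> L2_set (\<lambda>_::'n. 1::real) UNIV * L2_set (\<lambda>i. e $ i) UNIV"
    using L2_set_mult_ineq[of "\<lambda>_::'n. 1::real" "\<lambda>i. e $ i" UNIV] by simp
  also have "\<dots> = sqrt (real CARD('n)) * norm e"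
    by (simp add: L2_set_constant norm_vec_def L2_set_def)
  finally show ?thesis .
qed

lemma symmetric_matrix_inner_commute:
  fixes H :: "real^'n^'n"
  assumes "transpose H = H"
  shows "(H *v z) \<bullet> w = z \<bullet> (H *v w)"
  by (metis assms dot_lmul_matrix vector_transpose_matrix)

lemma finite_eigenvalues_symmetric:
  fixes H :: "real^'n^'n"
  assumes sym: "transpose H = H"
  shows "finite {\<mu>. \<exists>z. z \<noteq> 0 \<and> H *v z = \<mu> *\<^sub>R z}"
proof -
  \<comment> \<open>eigenvectors of distinct eigenvalues are orthogonal, hence independent; without finiteness
    the Min in lambda_min would be unspecified\<close>
  define S where "S = {\<mu>. \<exists>z. z \<noteq> 0 \<and> H *v z = \<mu> *\<^sub>R z}"
  define e where "e \<mu> = (SOME z. z \<noteq> 0 \<and> H *v z = \<mu> *\<^sub>R z)" for \<mu>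
  have e: "e \<mu> \<noteq> 0 \<and> H *v e \<mu> = \<mu> *\<^sub>R e \<mu>" if "\<mu> \<in> S" for \<mu>
    using that unfolding S_def e_def by (metis (mono_tags, lifting) mem_Collect_eq)
  have orth: "e \<mu>1 \<bullet> e \<mu>2 = 0" if "\<mu>1 \<in> S" "\<mu>2 \<in> S" "\<mu>1 \<noteq> \<mu>2" for \<mu>1 \<mu>2
  proof -
    have "\<mu>1 * (e \<mu>1 \<bullet> e \<mu>2) = (H *v e \<mu>1) \<bullet> e \<mu>2" using e[OF that(1)] by simp
    also have "\<dots> = e \<mu>1 \<bullet> (H *v e \<mu>2)" by (rule symmetric_matrix_inner_commute[OF sym])
    also have "\<dots> = \<mu>2 * (e \<mu>1 \<bullet> e \<mu>2)" using e[OF that(2)] by simp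
    finally show ?thesis using that(3) by simp
  qed
  then have "inj_on e S"
    by (metis e inj_onI inner_eq_zero_iff)
  moreover have "independent (e ` S)"
    by (rule pairwise_orthogonal_independent)
       (use orth e in \<open>auto simp: pairwise_def orthogonal_def\<close>)
  ultimately show ?thesis
    unfolding S_def[symmetric] by (metis finiteI_independent finite_imageD)
qed

lemma lambda_min_le_eigenvalue:
  fixes H :: "real^'n^'n"
  assumes "transpose H = H" and "z \<noteq> 0" and "H *v z = \<mu> *\<^sub>R z"
  shows "lambda_min H \<le> \<mu>"
  unfolding lambda_min_def using assms finite_eigenvalues_symmetric[OF assms(1)]
  by (intro Min_le) auto

lemma exists_unit_minimizer_quadratic_form:
  fixes H :: "real^'n^'n"
  obtains z0 where "norm z0 = 1" and "\<And>w. (z0 \<bullet> (H *v z0)) * (w \<bullet> w) \<le> w \<bullet> (H *v w)"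
proof -
  define Q where "Q z = z \<bullet> (H *v z)" for z :: "real^'n"
  have "continuous_on (sphere 0 1) Q"
    unfolding Q_def by (intro continuous_intros linear_continuous_on bounded_linear_intros)
  moreover have "sphere (0::real^'n) 1 \<noteq> {}"
    by simp
  ultimately obtain z0 where z0: "z0 \<in> sphere 0 1" and min: "\<And>w. w \<in> sphere 0 1 \<Longrightarrow> Q z0 \<le> Q w"
    using continuous_attains_inf[OF compact_sphere] by blast
  have "Q z0 * (w \<bullet> w) \<le> Q w" for w
  proof (cases "w = 0")
    case False
    have "Q z0 \<le> Q (inverse (norm w) *\<^sub>R w)"
      using False by (intro min) simp
    also have "\<dots> = Q w / (norm w)\<^sup>2"
      by (simp add: Q_def matrix_vector_mult_scaleR power2_eq_square divide_inverse mult.commute)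
    finally show ?thesis
      using False by (simp add: pos_le_divide_eq power2_norm_eq_inner)
  qed (simp add: Q_def)
  with z0 that show ?thesis by (simp add: Q_def)
qed

lemma linear_coeff_eq_0_if_quadratic_nonneg:
  fixes b K :: real
  assumes "\<And>s. 0 \<le> b * s + K * s\<^sup>2"
  shows "b = 0"
proof (rule ccontr)
  assume "b \<noteq> 0"
  define q where "q = b\<^sup>2 / (\<bar>K\<bar> + 1)"
  define s where "s = - b / (\<bar>K\<bar> + 1)"
  have q_pos: "q > 0" using \<open>b \<noteq> 0\<close> by (simp add: q_def add_pos_nonneg)
  have "K * s\<^sup>2 \<le> \<bar>K\<bar> * s\<^sup>2" by (simp add: mult_right_mono)
  also have "\<dots> = \<bar>K\<bar> / (\<bar>K\<bar> + 1) * q" by (simp add: s_def q_def power2_eq_square)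
  also have "\<dots> < q" using q_pos by (simp add: field_simps)
  also have "\<dots> = - b * s" by (simp add: s_def q_def power2_eq_square)
  finally show False using assms[of s] by linarith
qed

lemma quadratic_form_minimizer_is_eigenvector:
  fixes H :: "real^'n^'n"
  assumes sym: "transpose H = H"
    and ge: "\<And>w. \<mu> * (w \<bullet> w) \<le> w \<bullet> (H *v w)"
    and eq: "z \<bullet> (H *v z) = \<mu> * (z \<bullet> z)"
  shows "H *v z = \<mu> *\<^sub>R z"
proof -
  \<comment> \<open>perturb z along the residual r: s \<mapsto> w \<bullet> H w - \<mu> |w|^2 at w = z + s r is nonnegative and
    vanishes at s = 0, so its linear coefficient 2 |r|^2 vanishes\<close>
  define r where "r = H *v z - \<mu> *\<^sub>R z"
  have zHr: "z \<bullet> (H *v r) = r \<bullet> (H *v z)"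
    by (metis sym symmetric_matrix_inner_commute inner_commute)
  have rHz: "r \<bullet> (H *v z) = r \<bullet> r + \<mu> * (z \<bullet> r)"
    by (subst (2) r_def) (simp add: inner_diff_right inner_commute)
  have "0 \<le> (2 * (r \<bullet> r)) * s + (r \<bullet> (H *v r) - \<mu> * (r \<bullet> r)) * s\<^sup>2" for s
  proof -
    have "(z + s *\<^sub>R r) \<bullet> (H *v (z + s *\<^sub>R r))
        = z \<bullet> (H *v z) + 2 * s * (r \<bullet> (H *v z)) + s\<^sup>2 * (r \<bullet> (H *v r))"
      unfolding matrix_vector_right_distrib matrix_vector_mult_scaleR inner_add_left inner_add_right
        inner_scaleR_left inner_scaleR_right zHr
      by (simp add: power2_eq_square algebra_simps)
    moreover have "(z + s *\<^sub>R r) \<bullet> (z + s *\<^sub>R r) = z \<bullet> z + 2 * s * (z \<bullet> r) + s\<^sup>2 * (r \<bullet> r)"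
      unfolding inner_add_left inner_add_right inner_scaleR_left inner_scaleR_right
      by (simp add: inner_commute power2_eq_square algebra_simps)
    ultimately have "\<mu> * (z \<bullet> z + 2 * s * (z \<bullet> r) + s\<^sup>2 * (r \<bullet> r))
        \<le> \<mu> * (z \<bullet> z) + 2 * s * (r \<bullet> r + \<mu> * (z \<bullet> r)) + s\<^sup>2 * (r \<bullet> (H *v r))"
      using ge[of "z + s *\<^sub>R r"] by (simp only: eq rHz)
    then show ?thesis by (simp add: algebra_simps)
  qed
  then have "r \<bullet> r = 0"
    using linear_coeff_eq_0_if_quadratic_nonneg by fastforce
  then show ?thesis by (simp add: r_def)
qed

lemma lambda_min_mult_le_quadratic_form:
  fixes H :: "real^'n^'n"
  assumes sym: "transpose H = H"
  shows "lambda_min H * (z \<bullet> z) \<le> z \<bullet> (H *v z)"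
proof -
  obtain z0 where z0: "norm z0 = 1" and min: "\<And>w. (z0 \<bullet> (H *v z0)) * (w \<bullet> w) \<le> w \<bullet> (H *v w)"
    using exists_unit_minimizer_quadratic_form[of H] by blast
  have "H *v z0 = (z0 \<bullet> (H *v z0)) *\<^sub>R z0"
    using z0 by (intro quadratic_form_minimizer_is_eigenvector[OF sym min]) (simp add: norm_eq_1)
  then have "lambda_min H \<le> z0 \<bullet> (H *v z0)"
    using z0 by (intro lambda_min_le_eigenvalue[OF sym]) auto
  then have "lambda_min H * (z \<bullet> z) \<le> (z0 \<bullet> (H *v z0)) * (z \<bullet> z)"
    by (simp add: mult_right_mono)
  with min[of z] show ?thesis by linarith
qed

lemma residual_norm_le_exp_decay:
  fixes f :: "real \<Rightarrow> real^'n" and H :: "real \<Rightarrow> real^'n^'n"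
  assumes deriv: "\<And>s. s \<in> {0..T} \<Longrightarrow> (f has_vector_derivative - (H s *v (f s - y))) (at s within {0..T})"
    and sym: "\<And>s. transpose (H s) = H s"
    and lambda_min_ge: "\<And>s. s \<in> {0..T} \<Longrightarrow> lambda_min (H s) \<ge> \<kappa>"
    and t: "t \<in> {0..T}"
  shows "norm (f t - y) \<le> exp (- \<kappa> * t) * norm (f 0 - y)"
proof (rule norm_le_exp_decay[OF _ _ t])
  fix s assume s: "s \<in> {0..T}"
  show "((\<lambda>s. f s - y) has_vector_derivative - (H s *v (f s - y))) (at s within {0..T})"
    using deriv[OF s] by (auto intro!: derivative_eq_intros)
  have "\<kappa> * ((f s - y) \<bullet> (f s - y)) \<le> lambda_min (H s) * ((f s - y) \<bullet> (f s - y))"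
    using lambda_min_ge[OF s] by (intro mult_right_mono) auto
  also have "\<dots> \<le> (f s - y) \<bullet> (H s *v (f s - y))"
    by (rule lambda_min_mult_le_quadratic_form[OF sym])
  finally show "(f s - y) \<bullet> - (H s *v (f s - y)) \<le> - \<kappa> * (norm (f s - y))\<^sup>2"
    by (simp add: power2_norm_eq_inner)
qed

lemma transpose_Gmat_add_scaleR_Vmat:
  "transpose (Gmat v x + s *\<^sub>R Vmat \<alpha> c g v x) = Gmat v x + s *\<^sub>R Vmat \<alpha> c g v x"
  by (simp add: transpose_def Gmat_def Vmat_def vec_eq_iff inner_commute mult_ac)

lemma abs_ind_mult_inner_div_norm_le_1:
  fixes v x :: "real^'d"
  assumes "norm x \<le> 1"
  shows "\<bar>ind v x * ((v \<bullet> x) / norm v)\<bar> \<le> 1"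
proof (cases "v = 0")
  case False
  have "\<bar>v \<bullet> x\<bar> \<le> norm v * norm x" by (rule Cauchy_Schwarz_ineq2)
  also have "\<dots> \<le> norm v" using assms by (simp add: mult_left_le)
  finally show ?thesis
    using False by (auto simp: ind_def divide_le_eq_1)
qed simp

lemma abs_scale_gradient_le:
  fixes x :: "'n::finite \<Rightarrow> real^'d" and e :: "real^'n"
  assumes "\<forall>i. norm (x i) \<le> 1" and "c \<in> {-1, 1}"
  shows "\<bar>\<Sum>i\<in>UNIV. e $ i * (c / sqrt (real m)) * ind v (x i) * ((v \<bullet> x i) / norm v)\<bar>
    \<le> sqrt (real CARD('n)) * norm e / sqrt (real m)"
proof -
  have "\<bar>c * (ind v (x i) * ((v \<bullet> x i) / norm v))\<bar> \<le> 1" for i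
    using assms abs_ind_mult_inner_div_norm_le_1[of "x i" v] by (auto simp: abs_mult)
  then have "\<bar>\<Sum>i\<in>UNIV. e $ i * (c * (ind v (x i) * ((v \<bullet> x i) / norm v)))\<bar>
      \<le> sqrt (real CARD('n)) * norm e"
    by (rule abs_sum_weighted_le_sqrt_card_mult_norm)
  moreover have "(\<Sum>i\<in>UNIV. e $ i * (c / sqrt (real m)) * ind v (x i) * ((v \<bullet> x i) / norm v))
      = (\<Sum>i\<in>UNIV. e $ i * (c * (ind v (x i) * ((v \<bullet> x i) / norm v)))) / sqrt (real m)"
    by (simp add: sum_divide_distrib mult_ac)
  ultimately show ?thesis
    by (simp add: divide_right_mono)
qed

theorem lemmaB8:
  fixes x :: "'n::finite \<Rightarrow> real^'d" and y :: "real^'n"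
    and c :: "'m::finite \<Rightarrow> real"
    and v :: "'m \<Rightarrow> real \<Rightarrow> real^'d" and g :: "'m \<Rightarrow> real \<Rightarrow> real"
    and f :: "real \<Rightarrow> real^'n"
    and \<alpha> \<omega> T :: real
  assumes x_bound: "\<forall>i. norm (x i) \<le> 1"
    and alpha_pos: "\<alpha> > 0"
    and c_sign: "\<forall>k. c k \<in> {-1, 1}"
    and v_init: "\<forall>k. v k 0 \<noteq> 0"
    and g_init: "\<forall>k. g k 0 = norm (v k 0) / \<alpha>"
    and f_def: "\<forall>t. f t = (\<chi> i. net_out c (\<lambda>k. g k t) (\<lambda>k. v k t) (x i))"
    and g_flow: "\<forall>k. \<forall>t\<in>{0..T}. (g k has_real_derivative
        - (\<Sum>i\<in>UNIV. (f t $ i - y $ i) * (c k / sqrt (real CARD('m))) * ind (v k t) (x i)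
                        * ((v k t \<bullet> x i) / norm (v k t)))) (at t within {0..T})"
    and v_flow: "\<forall>k. \<forall>t\<in>{0..T}. (v k has_vector_derivative
        - (\<Sum>i\<in>UNIV. ((f t $ i - y $ i) * (c k / sqrt (real CARD('m))) * ind (v k t) (x i)
                        * (g k t / norm (v k t))) *\<^sub>R perp (v k t) (x i))) (at t within {0..T})"
    and f_flow: "\<forall>t\<in>{0..T}. (f has_vector_derivative
        - (((1 / \<alpha>^2) *\<^sub>R Vmat \<alpha> c (\<lambda>k. g k t) (\<lambda>k. v k t) x + Gmat (\<lambda>k. v k t) x)
             *v (f t - y))) (at t within {0..T})"
    and omega_pos: "\<omega> > 0"
    and eig: "\<forall>t\<in>{0..T}. lambda_min (Gmat (\<lambda>k. v k t) x
                 + (1 / \<alpha>^2) *\<^sub>R Vmat \<alpha> c (\<lambda>k. g k t) (\<lambda>k. v k t) x) \<ge> \<omega> / 2"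
  shows "\<forall>k. \<forall>t\<in>{0..T}. \<bar>g k t - g k 0\<bar>
           \<le> 4 * sqrt (real CARD('n)) * norm (f 0 - y) / (sqrt (real CARD('m)) * \<omega>)"
proof (intro allI ballI)
  fix k t assume t: "t \<in> {0..T}"
  define C where "C = sqrt (real CARD('n)) * norm (f 0 - y) / sqrt (real CARD('m))"
  have decay: "norm (f s - y) \<le> exp (- (\<omega> / 2) * s) * norm (f 0 - y)" if "s \<in> {0..T}" for s
    using f_flow eig that
    by (intro residual_norm_le_exp_decay[where H="\<lambda>s. Gmat (\<lambda>k. v k s) x
        + (1 / \<alpha>^2) *\<^sub>R Vmat \<alpha> c (\<lambda>k. g k s) (\<lambda>k. v k s) x"])
       (auto simp: transpose_Gmat_add_scaleR_Vmat add.commute)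
  define g' where "g' s = - (\<Sum>i\<in>UNIV. (f s $ i - y $ i) * (c k / sqrt (real CARD('m)))
    * ind (v k s) (x i) * ((v k s \<bullet> x i) / norm (v k s)))" for s
  have g_deriv: "(g k has_real_derivative g' s) (at s within {0..T})" if "s \<in> {0..T}" for s
    using g_flow that unfolding g'_def by blast
  have g'_bound: "\<bar>g' s\<bar> \<le> C * exp (- (\<omega> / 2) * s)" if "s \<in> {0..T}" for s
  proof -
    have "\<bar>g' s\<bar> \<le> sqrt (real CARD('n)) * norm (f s - y) / sqrt (real CARD('m))"
      using abs_scale_gradient_le[OF x_bound c_sign[rule_format, of k], where e="f s - y" and m="CARD('m)"]
      by (simp add: g'_def)
    also have "\<dots> \<le> C * exp (- (\<omega> / 2) * s)"
      using decay[OF that] by (simp add: C_def divide_right_mono mult_ac)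
    finally show ?thesis .
  qed
  have "\<bar>g k t - g k 0\<bar> \<le> C / (\<omega> / 2)"
    by (rule abs_diff_le_of_deriv_exp_bound[OF _ g_deriv g'_bound t]) (use omega_pos in simp)
  also have "\<dots> \<le> 4 * sqrt (real CARD('n)) * norm (f 0 - y) / (sqrt (real CARD('m)) * \<omega>)"
    using omega_pos by (simp add: C_def field_simps)
  finally show "\<bar>g k t - g k 0\<bar> \<le> 4 * sqrt (real CARD('n)) * norm (f 0 - y) / (sqrt (real CARD('m)) * \<omega>)" .
qed

end
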